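(* (i) $\mathrm{Box}(\Sigma_+)\setminus\mathrm{Box}(\Sigma^{es}_+)=\mathrm{Box}(\Sigma_-)\setminus\mathrm{Box}(\Sigma^{es}_-)$; moreover, for any $v$ in these sets, written $v=\sum_jq_jv_j$ with $0\le q_j<1$ and $q_j=0$ if $\mathbb R_{\ge0}v_j\not\prec\sigma(v)$, the minimal cone $\sigma(v)$ containing $v$ is the same in $\Sigma_+$ and $\Sigma_-$, and the associated $n$-tuples of roots of unity $(y^v_1,\dots,y^v_n)$, $y^v_j=e^{2\pi iq_j}$, are the same. (ii) For any $v\in\mathrm{Box}(\Sigma^{es}_+)$ with associated $y^v$ (computed in $\Sigma_+$) and any $t\in\mathcal I(y^v)$, the $n$-tuple $(y^v_1t^{h_1},\dots,y^v_nt^{h_n})$ equals $y^{v'}$ (computed in $\Sigma_-$) for some $v'\in\mathrm{Box}(\Sigma^{es}_-)$, i.e. determines the maximal ideal of $K_0(\mathbb P_{\Sigma_-},\mathbb C)$ corresponding to an element of $\mathrm{Box}(\Sigma^{es}_-)$; moreover every $n$-tuple $y^{v'}$ with $v'\in\mathrm{Box}(\Sigma^{es}_-)$ arises in this way for suitable $v\in\mathrm{Box}(\Sigma^{es}_+)$ and $t\in\mathcal I(y^v)$.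
   Context: $N\cong\mathbb Z^d$ lattice, $\mathcal A=\{v_1,\dots,v_n\}\subset N$ generating $N$ with a homomorphism $\mathrm h:N\to\mathbb Z$, $\mathrm h(v_j)=1$; $\mathbb L=\{l\in\mathbb Z^n:\sum l_jv_j=0\}$; $\Delta=\mathrm{Conv}(\mathcal A)$. $\Sigma_+,\Sigma_-$ are the simplicial fans supported on $\mathbb R_{\ge0}\Delta$ induced by two regular triangulations of $\Delta$ with vertices in $\mathcal A$ that are joined by an edge of the secondary polytope. There is a circuit $I\subset\mathcal A$ with a primitive relation $h=(h_1,\dots,h_n)\in\mathbb L$ ($\sum h_jv_j=0$, $I=\{v_j:h_j\ne0\}$), $I_\pm=\{v_j:\pm h_j>0\}$, such that, calling $\mathcal F\subset\mathcal A\setminus I$ separating if $\mathcal F\cup(I\setminus\{v\})$ generates a maximal cone of $\Sigma_\pm$ for every $v\in I_\pm$, $\Sigma_-$ is obtained from $\Sigma_+$ by replacing all maximal cones generated by $\mathcal F\cup(I\setminus\{v\})$, $v\in I_+$, with the cones generated by $\mathcal F\cup(I\setminus\{v\})$, $v\in I_-$, for all separating $\mathcal F$. Maximal cones of $\Sigma_\pm$ of the form $\mathcal F\cup(I\setminus\{v\})$ ($\mathcal F$ separating, $v\in I_\pm$) are called essential; $\Sigma^{es}_\pm(d)$ is the set of them. For a fan $\Sigma$, $\mathrm{Box}(\Sigma)$ is the set of $v\in N$ with $v=\sum q_jv_j$, $0\le q_j<1$, $q_j=0$ unless $v_j$ spans a ray of a fixed maximal cone; $\sigma(v)$ is the smallest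 cone containing $v$; $y^v_j=e^{2\pi iq_j}$. $\mathrm{Box}(\Sigma^{es}_\pm)$ is the set of $v\in\mathrm{Box}(\Sigma_\pm)$ whose $\sigma(v)$ is a face of some essential maximal cone. For $r\in(\mathbb C^* )^n$, $\mathcal I(r)$ is the set of $t\in\mathbb C^*$ such that $r_jt^{h_j}=1$ for some $j$ with $v_j\in I_-$. (The maximal ideals of $K_0(\mathbb P_{\Sigma_-},\mathbb C)=\mathbb C[R_j^{\pm1}]/(\text{relations})$ are $(R_j-y^{v'}_j)_j$, $v'\in\mathrm{Box}(\Sigma_-)$.) *)

theory Defs
  imports "HOL-Analysis.Analysis"
begin

text \<open>Lattice N = int^'d (d = CARD('d)); the configuration A is given by the
  vectors v 0, ..., v (n-1).  Cones, fans and triangulations are encoded through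
  index sets S of {..<n}.\<close>

definition rv :: "int^'d \<Rightarrow> real^'d" where
  "rv x = (\<chi> i. real_of_int (x$i))"

definition rcone :: "(nat \<Rightarrow> int^'d) \<Rightarrow> nat set \<Rightarrow> (real^'d) set" where
  "rcone v F = {y. \<exists>a. (\<forall>j\<in>F. 0 \<le> a j) \<and> y = (\<Sum>j\<in>F. a j *\<^sub>R rv (v j))}"

definition lin_indep_idx :: "(nat \<Rightarrow> int^'d) \<Rightarrow> nat set \<Rightarrow> bool" where
  "lin_indep_idx v F \<longleftrightarrow>
     (\<forall>c. (\<Sum>j\<in>F. c j *\<^sub>R rv (v j)) = 0 \<longrightarrow> (\<forall>j\<in>F. c j = 0))"

text \<open>A triangulation of Delta = Conv(A) with vertices in A, given by the set of
  index sets of its maximal simplices (equivalently, the maximal cones of the fan).\<close>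
definition is_triangulation :: "(nat \<Rightarrow> int^'d::finite) \<Rightarrow> nat \<Rightarrow> nat set set \<Rightarrow> bool" where
  "is_triangulation v n T \<longleftrightarrow>
     (\<forall>S\<in>T. S \<subseteq> {..<n} \<and> card S = CARD('d) \<and> lin_indep_idx v S) \<and>
     \<Union>(rcone v ` T) = rcone v {..<n} \<and>
     (\<forall>S\<in>T. \<forall>S'\<in>T. rcone v S \<inter> rcone v S' = rcone v (S \<inter> S'))"

definition is_regular_triangulation :: "(nat \<Rightarrow> int^'d::finite) \<Rightarrow> nat \<Rightarrow> nat set set \<Rightarrow> bool" where
  "is_regular_triangulation v n T \<longleftrightarrow> is_triangulation v n T \<and>
     (\<exists>\<omega>::nat \<Rightarrow> real. \<forall>S\<in>T. \<exists>l::real^'d.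
        (\<forall>j\<in>S. l \<bullet> rv (v j) = \<omega> j) \<and> (\<forall>j<n. j \<notin> S \<longrightarrow> l \<bullet> rv (v j) < \<omega> j))"

text \<open>GKZ vector (up to the constant factor d!, the volume of conv(0, simplex)
  in R^d is proportional to the normalized volume of the simplex in Delta).\<close>
definition gkz :: "(nat \<Rightarrow> int^'d::finite) \<Rightarrow> nat set set \<Rightarrow> nat \<Rightarrow> real" where
  "gkz v T j = (\<Sum>S\<in>{S\<in>T. j \<in> S}. measure lebesgue (convex hull (insert 0 ((rv \<circ> v) ` S))))"

text \<open>T1, T2 are joined by an edge of the secondary polytope (convex hull of the GKZ
  vectors of all triangulations).\<close>
definition secondary_edge :: "(nat \<Rightarrow> int^'d::finite) \<Rightarrow> nat \<Rightarrow> nat set set \<Rightarrow> nat set set \<Rightarrow> bool" where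
  "secondary_edge v n T1 T2 \<longleftrightarrow>
     (\<exists>j<n. gkz v T1 j \<noteq> gkz v T2 j) \<and>
     (\<exists>\<psi>::nat \<Rightarrow> real.
        (\<forall>T. is_triangulation v n T \<longrightarrow>
              (\<Sum>j<n. \<psi> j * gkz v T j) \<le> (\<Sum>j<n. \<psi> j * gkz v T1 j)) \<and>
        (\<Sum>j<n. \<psi> j * gkz v T2 j) = (\<Sum>j<n. \<psi> j * gkz v T1 j) \<and>
        (\<forall>T. is_triangulation v n T \<and>
              (\<Sum>j<n. \<psi> j * gkz v T j) = (\<Sum>j<n. \<psi> j * gkz v T1 j) \<longrightarrow>
              (\<exists>\<mu>\<in>{0..1}. \<forall>j<n. gkz v T j = (1 - \<mu>) * gkz v T1 j + \<mu> * gkz v T2 j)))"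

definition in_L :: "(nat \<Rightarrow> int^'d) \<Rightarrow> nat \<Rightarrow> (nat \<Rightarrow> int) \<Rightarrow> bool" where
  "in_L v n l \<longleftrightarrow> (\<forall>j\<ge>n. l j = 0) \<and> (\<Sum>j<n. l j *s v j) = 0"

definition primitive_in_L :: "(nat \<Rightarrow> int^'d) \<Rightarrow> nat \<Rightarrow> (nat \<Rightarrow> int) \<Rightarrow> bool" where
  "primitive_in_L v n h \<longleftrightarrow> in_L v n h \<and> h \<noteq> (\<lambda>_. 0) \<and>
     (\<forall>(k::int) l. in_L v n l \<and> h = (\<lambda>j. k * l j) \<longrightarrow> \<bar>k\<bar> = 1)"

definition is_circuit :: "(nat \<Rightarrow> int^'d) \<Rightarrow> nat set \<Rightarrow> bool" where
  "is_circuit v I \<longleftrightarrow> \<not> lin_indep_idx v I \<and> (\<forall>j\<in>I. lin_indep_idx v (I - {j}))"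

definition Iplus :: "(nat \<Rightarrow> int) \<Rightarrow> nat set" where "Iplus h = {j. h j > 0}"
definition Iminus :: "(nat \<Rightarrow> int) \<Rightarrow> nat set" where "Iminus h = {j. h j < 0}"

definition separating :: "nat \<Rightarrow> (nat \<Rightarrow> int) \<Rightarrow> nat set set \<Rightarrow> nat set set \<Rightarrow> nat set \<Rightarrow> bool" where
  "separating n h Tp Tm F \<longleftrightarrow> F \<subseteq> {..<n} - {j. h j \<noteq> 0} \<and>
     (\<forall>j\<in>Iplus h. F \<union> ({j. h j \<noteq> 0} - {j}) \<in> Tp) \<and>
     (\<forall>j\<in>Iminus h. F \<union> ({j. h j \<noteq> 0} - {j}) \<in> Tm)"

definition essential_plus :: "nat \<Rightarrow> (nat \<Rightarrow> int) \<Rightarrow> nat set set \<Rightarrow> nat set set \<Rightarrow> nat set set" where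
  "essential_plus n h Tp Tm =
     {F \<union> ({i. h i \<noteq> 0} - {j}) | F j. separating n h Tp Tm F \<and> j \<in> Iplus h}"

definition essential_minus :: "nat \<Rightarrow> (nat \<Rightarrow> int) \<Rightarrow> nat set set \<Rightarrow> nat set set \<Rightarrow> nat set set" where
  "essential_minus n h Tp Tm =
     {F \<union> ({i. h i \<noteq> 0} - {j}) | F j. separating n h Tp Tm F \<and> j \<in> Iminus h}"

definition box_rep :: "(nat \<Rightarrow> int^'d) \<Rightarrow> nat \<Rightarrow> nat set set \<Rightarrow> int^'d \<Rightarrow> (nat \<Rightarrow> real) \<Rightarrow> bool" where
  "box_rep v n T x q \<longleftrightarrow> (\<exists>S\<in>T. (\<forall>j. 0 \<le> q j \<and> q j < 1) \<and> (\<forall>j. j \<notin> S \<longrightarrow> q j = 0) \<and>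
      rv x = (\<Sum>j<n. q j *\<^sub>R rv (v j)))"

definition Box :: "(nat \<Rightarrow> int^'d) \<Rightarrow> nat \<Rightarrow> nat set set \<Rightarrow> (int^'d) set" where
  "Box v n T = {x. \<exists>q. box_rep v n T x q}"

definition fan_cones :: "(nat \<Rightarrow> int^'d) \<Rightarrow> nat set set \<Rightarrow> (real^'d) set set" where
  "fan_cones v T = {rcone v F | F. \<exists>S\<in>T. F \<subseteq> S}"

definition sigma :: "(nat \<Rightarrow> int^'d) \<Rightarrow> nat set set \<Rightarrow> int^'d \<Rightarrow> (real^'d) set" where
  "sigma v T x = \<Inter>{C \<in> fan_cones v T. rv x \<in> C}"

definition Box_es :: "(nat \<Rightarrow> int^'d) \<Rightarrow> nat \<Rightarrow> nat set set \<Rightarrow> nat set set \<Rightarrow> (int^'d) set" where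
  "Box_es v n T E = {x \<in> Box v n T. \<exists>S\<in>E. sigma v T x face_of rcone v S}"

definition yv :: "(nat \<Rightarrow> real) \<Rightarrow> nat \<Rightarrow> complex" where
  "yv q j = cis (2 * pi * q j)"

definition Ical :: "nat \<Rightarrow> (nat \<Rightarrow> int) \<Rightarrow> (nat \<Rightarrow> complex) \<Rightarrow> complex set" where
  "Ical n h r = {t. t \<noteq> 0 \<and> (\<exists>j<n. h j < 0 \<and> r j * t powi h j = 1)}"

end

theory Submission
  imports Defs "HOL-Library.Real_Mod"
begin

(* Write I for the support of h and I_+, I_- for its positive and negative parts.

   (i) Off the essential cones the two fans coincide, so a box element v whose cone is not
   essential in Sigma_+ keeps its coefficients q in Sigma_-. Were v essential in Sigma_-, its
   support would lie in F \<union> (I - {j}) with j in I_-; each coefficient at I_+ is then nonzero,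
   since otherwise v would be essential in Sigma_+. So I_+ lies in the cone of v and I_- in the
   cone F \<union> (I - {i}), i in I_+, of Sigma_+, and the relation h splits into two nonnegative
   representations of one point in cones of the simplicial fan Sigma_+: they agree, so h = 0.

   (ii) For t = exp(2 pi i tau), multiplying y^v by t^h amounts to shifting q by tau h and
   taking fractional parts, which stays in the lattice because h is a relation. The condition
   t in I(y^v) says that the shifted coefficient at some j in I_- is an integer, so the new
   support lies in the essential cone F \<union> (I - {j}) of Sigma_-. Conversely, shifting the
   coefficients q' of v' by -tau h with tau = q'_i / h_i, i in I_+, lands in Sigma_+.

   Only simpliciality of both fans, the flip description of Sigma_-, h being a nonzero relation
   and the height function (which gives h entries of both signs) are used. *)

lemma rv_zero [simp]: "rv 0 = 0"
  by (simp add: rv_def vec_eq_iff)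

lemma rv_add [simp]: "rv (x + y) = rv x + rv y"
  by (simp add: rv_def vec_eq_iff)

lemma rv_diff [simp]: "rv (x - y) = rv x - rv y"
  by (simp add: rv_def vec_eq_iff)

lemma rv_smult [simp]: "rv (k *s x) = of_int k *\<^sub>R rv x"
  by (simp add: rv_def vec_eq_iff)

lemma rv_sum [simp]: "rv (sum f A) = (\<Sum>j\<in>A. rv (f j))"
  by (induction A rule: infinite_finite_induct) auto

definition simplicial_fan :: "(nat \<Rightarrow> int^'d) \<Rightarrow> nat \<Rightarrow> nat set set \<Rightarrow> bool" where
  "simplicial_fan v n T \<longleftrightarrow> (\<forall>S\<in>T. S \<subseteq> {..<n} \<and> lin_indep_idx v S) \<and>
     (\<forall>S\<in>T. \<forall>S'\<in>T. rcone v S \<inter> rcone v S' = rcone v (S \<inter> S'))"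

lemma is_triangulation_simplicial_fan: "is_triangulation v n T \<Longrightarrow> simplicial_fan v n T"
  by (auto simp: is_triangulation_def simplicial_fan_def)

lemma simplicial_fanD:
  assumes "simplicial_fan v n T" "S \<in> T"
  shows "S \<subseteq> {..<n}" "lin_indep_idx v S"
  using assms by (auto simp: simplicial_fan_def)

lemma rcone_iff_coeffs:
  assumes "F \<subseteq> {..<n}"
  shows "y \<in> rcone v F \<longleftrightarrow>
    (\<exists>a. (\<forall>j. 0 \<le> a j) \<and> (\<forall>j. j \<notin> F \<longrightarrow> a j = 0) \<and> y = (\<Sum>j<n. a j *\<^sub>R rv (v j)))"
proof
  assume "y \<in> rcone v F"
  then obtain a where a: "\<forall>j\<in>F. 0 \<le> a j" "y = (\<Sum>j\<in>F. a j *\<^sub>R rv (v j))"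
    unfolding rcone_def by blast
  define b where "b j = (if j \<in> F then a j else 0)" for j
  have "y = (\<Sum>j<n. b j *\<^sub>R rv (v j))"
    unfolding a(2) by (rule sum.mono_neutral_cong_left) (use assms in \<open>auto simp: b_def\<close>)
  with a(1) show "\<exists>a. (\<forall>j. 0 \<le> a j) \<and> (\<forall>j. j \<notin> F \<longrightarrow> a j = 0) \<and> y = (\<Sum>j<n. a j *\<^sub>R rv (v j))"
    by (intro exI[of _ b]) (auto simp: b_def)
next
  assume "\<exists>a. (\<forall>j. 0 \<le> a j) \<and> (\<forall>j. j \<notin> F \<longrightarrow> a j = 0) \<and> y = (\<Sum>j<n. a j *\<^sub>R rv (v j))"
  then obtain a where a: "\<forall>j. 0 \<le> a j" "\<forall>j. j \<notin> F \<longrightarrow> a j = 0" "y = (\<Sum>j<n. a j *\<^sub>R rv (v j))"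
    by blast
  have "y = (\<Sum>j\<in>F. a j *\<^sub>R rv (v j))"
    unfolding a(3) by (rule sum.mono_neutral_cong_right) (use assms a(2) in auto)
  with a(1) show "y \<in> rcone v F"
    unfolding rcone_def by auto
qed

lemma rcone_mono:
  assumes "F \<subseteq> {..<n}" "P \<subseteq> F"
  shows "rcone v P \<subseteq> rcone v F"
proof
  fix y assume "y \<in> rcone v P"
  moreover have "P \<subseteq> {..<n}"
    using assms by blast
  ultimately obtain a where a: "\<forall>j. 0 \<le> a j" "\<forall>j. j \<notin> P \<longrightarrow> a j = 0" "y = (\<Sum>j<n. a j *\<^sub>R rv (v j))"
    by (auto simp: rcone_iff_coeffs)
  then show "y \<in> rcone v F"
    unfolding rcone_iff_coeffs[OF assms(1)] using assms(2) by (intro exI[of _ a]) auto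
qed

lemma lin_indep_idx_coeffs_unique:
  assumes indep: "lin_indep_idx v S" and Sn: "S \<subseteq> {..<n}"
    and a: "\<forall>j. j \<notin> S \<longrightarrow> a j = 0" and b: "\<forall>j. j \<notin> S \<longrightarrow> b j = 0"
    and eq: "(\<Sum>j<n. a j *\<^sub>R rv (v j)) = (\<Sum>j<n. b j *\<^sub>R rv (v j))"
  shows "a = b"
proof
  fix j
  have "(\<Sum>j\<in>S. (a j - b j) *\<^sub>R rv (v j)) = (\<Sum>j<n. (a j - b j) *\<^sub>R rv (v j))"
    using Sn a b by (intro sum.mono_neutral_left) auto
  also have "\<dots> = 0"
    using eq by (simp add: scaleR_diff_left sum_subtractf)
  finally have rel: "(\<Sum>j\<in>S. (a j - b j) *\<^sub>R rv (v j)) = 0" .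
  have "a j - b j = 0" if "j \<in> S"
    using indep[unfolded lin_indep_idx_def, rule_format, OF rel that] by simp
  then show "a j = b j"
    using a b by (cases "j \<in> S") auto
qed

lemma simplicial_fan_coeffs_unique:
  assumes fan: "simplicial_fan v n T" and S: "S \<in> T" and S': "S' \<in> T"
    and a: "\<forall>j. 0 \<le> a j" "\<forall>j. j \<notin> S \<longrightarrow> a j = 0"
    and b: "\<forall>j. 0 \<le> b j" "\<forall>j. j \<notin> S' \<longrightarrow> b j = 0"
    and eq: "(\<Sum>j<n. a j *\<^sub>R rv (v j)) = (\<Sum>j<n. b j *\<^sub>R rv (v j))"
  shows "a = b"
proof -
  let ?y = "\<Sum>j<n. a j *\<^sub>R rv (v j)"
  have "?y \<in> rcone v S \<inter> rcone v S'"
    using a b eq simplicial_fanD(1)[OF fan S] simplicial_fanD(1)[OF fan S']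
    by (auto simp: rcone_iff_coeffs)
  also have "\<dots> = rcone v (S \<inter> S')"
    using fan S S' by (simp add: simplicial_fan_def)
  finally obtain c where c: "\<forall>j. j \<notin> S \<inter> S' \<longrightarrow> c j = 0" "?y = (\<Sum>j<n. c j *\<^sub>R rv (v j))"
    using simplicial_fanD(1)[OF fan S] rcone_iff_coeffs[where F = "S \<inter> S'" and n = n] by blast
  have "a = c"
    using c a(2) by (intro lin_indep_idx_coeffs_unique[OF simplicial_fanD(2,1)[OF fan S]]) auto
  moreover have "b = c"
    using c b(2) eq by (intro lin_indep_idx_coeffs_unique[OF simplicial_fanD(2,1)[OF fan S']]) auto
  ultimately show ?thesis by simp
qed

lemma box_rep_unique:
  assumes "simplicial_fan v n T" "box_rep v n T x q" "box_rep v n T x q'"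
  shows "q = q'"
proof -
  obtain S S' where S: "S \<in> T" "S' \<in> T"
    and q: "\<forall>j. 0 \<le> q j" "\<forall>j. j \<notin> S \<longrightarrow> q j = 0" "rv x = (\<Sum>j<n. q j *\<^sub>R rv (v j))"
    and q': "\<forall>j. 0 \<le> q' j" "\<forall>j. j \<notin> S' \<longrightarrow> q' j = 0" "rv x = (\<Sum>j<n. q' j *\<^sub>R rv (v j))"
    using assms(2,3) unfolding box_rep_def by meson
  show ?thesis
    using q(3) q'(3) by (intro simplicial_fan_coeffs_unique[OF assms(1) S q(1,2) q'(1,2)]) simp
qed

lemma sigma_box_rep:
  assumes fan: "simplicial_fan v n T" and q: "box_rep v n T x q"
  shows "sigma v T x = rcone v {j. q j \<noteq> 0}"
proof -
  obtain S where S: "S \<in> T" "\<forall>j. 0 \<le> q j" "\<forall>j. j \<notin> S \<longrightarrow> q j = 0"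
    and x: "rv x = (\<Sum>j<n. q j *\<^sub>R rv (v j))"
    using q unfolding box_rep_def by meson
  have supp: "{j. q j \<noteq> 0} \<subseteq> S" and Sn: "S \<subseteq> {..<n}"
    using S(3) simplicial_fanD(1)[OF fan S(1)] by auto
  have "rv x \<in> rcone v {j. q j \<noteq> 0}"
    unfolding rcone_iff_coeffs[OF order_trans[OF supp Sn]] using S(2) x by (intro exI[of _ q]) auto
  moreover have "rcone v {j. q j \<noteq> 0} \<in> fan_cones v T"
    unfolding fan_cones_def using S(1) supp by blast
  moreover have "rcone v {j. q j \<noteq> 0} \<subseteq> C" if C: "C \<in> fan_cones v T" "rv x \<in> C" for C
  proof -
    obtain F S' where F: "C = rcone v F" "S' \<in> T" "F \<subseteq> S'"
      using C(1) unfolding fan_cones_def by blast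
    have Fn: "F \<subseteq> {..<n}"
      using F(3) simplicial_fanD(1)[OF fan F(2)] by blast
    obtain b where b: "\<forall>j. 0 \<le> b j" "\<forall>j. j \<notin> F \<longrightarrow> b j = 0" "rv x = (\<Sum>j<n. b j *\<^sub>R rv (v j))"
      using C(2) unfolding F(1) rcone_iff_coeffs[OF Fn] by blast
    have "q = b"
      using b F(3) x by (intro simplicial_fan_coeffs_unique[OF fan S(1) F(2) S(2,3)]) auto
    then have "{j. q j \<noteq> 0} \<subseteq> F"
      using b(2) by auto
    then show ?thesis
      unfolding F(1) by (rule rcone_mono[OF Fn])
  qed
  ultimately show ?thesis
    unfolding sigma_def by blast
qed

lemma convex_rcone: "convex (rcone v P)"
proof (rule convexI)
  fix y z and a b :: real
  assume yz: "y \<in> rcone v P" "z \<in> rcone v P" and ab: "0 \<le> a" "0 \<le> b"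
  obtain c where c: "\<forall>j\<in>P. 0 \<le> c j" "y = (\<Sum>j\<in>P. c j *\<^sub>R rv (v j))"
    using yz(1) unfolding rcone_def by blast
  obtain d where d: "\<forall>j\<in>P. 0 \<le> d j" "z = (\<Sum>j\<in>P. d j *\<^sub>R rv (v j))"
    using yz(2) unfolding rcone_def by blast
  have "a *\<^sub>R y + b *\<^sub>R z = (\<Sum>j\<in>P. (a * c j + b * d j) *\<^sub>R rv (v j))"
    unfolding c(2) d(2) by (simp add: scaleR_sum_right scaleR_add_left sum.distrib)
  moreover have "\<forall>j\<in>P. 0 \<le> a * c j + b * d j"
    using ab c(1) d(1) by simp
  ultimately show "a *\<^sub>R y + b *\<^sub>R z \<in> rcone v P"
    unfolding rcone_def by auto
qed

lemma rcone_face_of: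
  assumes indep: "lin_indep_idx v S" and Sn: "S \<subseteq> {..<n}" and PS: "P \<subseteq> S"
  shows "rcone v P face_of rcone v S"
  unfolding face_of_def
proof (intro conjI ballI impI)
  have Pn: "P \<subseteq> {..<n}"
    using PS Sn by blast
  show "rcone v P \<subseteq> rcone v S"
    by (rule rcone_mono[OF Sn PS])
  show "convex (rcone v P)"
    by (rule convex_rcone)
  fix y z x
  assume y: "y \<in> rcone v S" and z: "z \<in> rcone v S" and x: "x \<in> rcone v P"
    and seg: "x \<in> open_segment y z"
  obtain \<alpha> where \<alpha>: "\<forall>j. 0 \<le> \<alpha> j" "\<forall>j. j \<notin> S \<longrightarrow> \<alpha> j = 0" "y = (\<Sum>j<n. \<alpha> j *\<^sub>R rv (v j))"
    using y unfolding rcone_iff_coeffs[OF Sn] by blast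
  obtain \<beta> where \<beta>: "\<forall>j. 0 \<le> \<beta> j" "\<forall>j. j \<notin> S \<longrightarrow> \<beta> j = 0" "z = (\<Sum>j<n. \<beta> j *\<^sub>R rv (v j))"
    using z unfolding rcone_iff_coeffs[OF Sn] by blast
  obtain \<gamma> where \<gamma>: "\<forall>j. j \<notin> P \<longrightarrow> \<gamma> j = 0" "x = (\<Sum>j<n. \<gamma> j *\<^sub>R rv (v j))"
    using x unfolding rcone_iff_coeffs[OF Pn] by blast
  obtain u where u: "0 < u" "u < 1" "x = (1 - u) *\<^sub>R y + u *\<^sub>R z"
    using seg by (auto simp: in_segment)
  have "x = (\<Sum>j<n. ((1 - u) * \<alpha> j + u * \<beta> j) *\<^sub>R rv (v j))"
    unfolding u(3) \<alpha>(3) \<beta>(3) by (simp add: scaleR_sum_right scaleR_add_left sum.distrib)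
  then have "(\<lambda>j. (1 - u) * \<alpha> j + u * \<beta> j) = \<gamma>"
    using \<alpha>(2) \<beta>(2) \<gamma> PS by (intro lin_indep_idx_coeffs_unique[OF indep Sn]) auto
  then have "\<alpha> j = 0 \<and> \<beta> j = 0" if "j \<notin> P" for j
    using \<gamma>(1) \<alpha>(1) \<beta>(1) u(1,2) that
    by (smt (verit, ccfv_threshold) mult_nonneg_nonneg mult_pos_pos)
  then show "y \<in> rcone v P" "z \<in> rcone v P"
    unfolding rcone_iff_coeffs[OF Pn] using \<alpha> \<beta> by blast+
qed

lemma Box_es_iff_support:
  assumes fan: "simplicial_fan v n T" and ET: "E \<subseteq> T" and q: "box_rep v n T x q"
  shows "x \<in> Box_es v n T E \<longleftrightarrow> (\<exists>S\<in>E. \<forall>j. j \<notin> S \<longrightarrow> q j = 0)"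
proof
  assume "x \<in> Box_es v n T E"
  then obtain S where S: "S \<in> E" "sigma v T x face_of rcone v S"
    unfolding Box_es_def by blast
  have Sn: "S \<subseteq> {..<n}"
    using simplicial_fanD(1)[OF fan] S(1) ET by blast
  have "rv x \<in> sigma v T x"
    unfolding sigma_def by blast
  then have "rv x \<in> rcone v S"
    using face_of_imp_subset[OF S(2)] by blast
  then obtain b where b: "\<forall>j. 0 \<le> b j" "\<forall>j. j \<notin> S \<longrightarrow> b j = 0" "rv x = (\<Sum>j<n. b j *\<^sub>R rv (v j))"
    unfolding rcone_iff_coeffs[OF Sn] by blast
  obtain S0 where S0: "S0 \<in> T" "\<forall>j. 0 \<le> q j" "\<forall>j. j \<notin> S0 \<longrightarrow> q j = 0" "rv x = (\<Sum>j<n. q j *\<^sub>R rv (v j))"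
    using q unfolding box_rep_def by meson
  have "q = b"
    using b S0(4) S(1) ET by (intro simplicial_fan_coeffs_unique[OF fan S0(1) _ S0(2,3)]) auto
  then show "\<exists>S\<in>E. \<forall>j. j \<notin> S \<longrightarrow> q j = 0"
    using S(1) b(2) by blast
next
  assume "\<exists>S\<in>E. \<forall>j. j \<notin> S \<longrightarrow> q j = 0"
  then obtain S where S: "S \<in> E" "{j. q j \<noteq> 0} \<subseteq> S"
    by blast
  have "sigma v T x face_of rcone v S"
    unfolding sigma_box_rep[OF fan q] using S ET simplicial_fanD[OF fan]
    by (intro rcone_face_of) auto
  then show "x \<in> Box_es v n T E"
    unfolding Box_es_def Box_def using q S(1) by blast
qed

lemma in_L_real_relation:
  assumes "in_L v n g"
  shows "(\<Sum>j<n. of_int (g j) *\<^sub>R rv (v j)) = 0"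
proof -
  have "rv (\<Sum>j<n. g j *s v j) = 0"
    using assms by (simp add: in_L_def)
  then show ?thesis
    by simp
qed

lemma in_L_uminus: "in_L v n g \<Longrightarrow> in_L v n (- g)"
  by (simp add: in_L_def vector_smult_lneg sum_negf)

lemma relation_split_by_fan_eq_0:
  assumes fan: "simplicial_fan v n T" and S: "S \<in> T" and S': "S' \<in> T" and L: "in_L v n g"
    and pos: "Iplus g \<subseteq> S" and neg: "Iminus g \<subseteq> S'"
  shows "g = (\<lambda>_. 0)"
proof -
  define a :: "nat \<Rightarrow> real" where "a j = max (of_int (g j)) 0" for j
  define b :: "nat \<Rightarrow> real" where "b j = max (- of_int (g j)) 0" for j
  have g_ab: "of_int (g j) = a j - b j" for j
    by (simp add: a_def b_def)
  have "(\<Sum>j<n. (a j - b j) *\<^sub>R rv (v j)) = 0"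
    using in_L_real_relation[OF L] by (simp add: g_ab)
  then have "(\<Sum>j<n. a j *\<^sub>R rv (v j)) = (\<Sum>j<n. b j *\<^sub>R rv (v j))"
    by (simp add: scaleR_diff_left sum_subtractf)
  moreover have "\<forall>j. j \<notin> S \<longrightarrow> a j = 0" "\<forall>j. j \<notin> S' \<longrightarrow> b j = 0"
    using pos neg unfolding a_def b_def Iplus_def Iminus_def by force+
  ultimately have "a = b"
    by (intro simplicial_fan_coeffs_unique[OF fan S S']) (auto simp: a_def b_def)
  then show ?thesis
    using g_ab by (simp add: fun_eq_iff)
qed

lemma additive_smult:
  fixes f :: "int^'n \<Rightarrow> int"
  assumes "Modules.additive f"
  shows "f (k *s x) = k * f x"
proof (induction k rule: int_induct[where k = 0])
  case base
  show ?case
    using Modules.additive.zero[OF assms] by simp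
next
  case (step1 i)
  then show ?case
    by (simp add: vector_sadd_rdistrib Modules.additive.add[OF assms] distrib_right)
next
  case (step2 i)
  then show ?case
    by (simp add: vector_sub_rdistrib Modules.additive.diff[OF assms] left_diff_distrib)
qed

lemma height_relation_sum_eq_0:
  fixes ht :: "int^'d \<Rightarrow> int"
  assumes ht: "Modules.additive ht" and ht_v: "\<forall>j<n. ht (v j) = 1" and L: "in_L v n g"
  shows "(\<Sum>j<n. g j) = 0"
proof -
  have "(\<Sum>j<n. g j) = (\<Sum>j<n. g j * ht (v j))"
    using ht_v by simp
  also have "\<dots> = ht (\<Sum>j<n. g j *s v j)"
    by (simp add: Modules.additive.sum[OF ht] additive_smult[OF ht])
  also have "\<dots> = 0"
    using L Modules.additive.zero[OF ht] by (simp add: in_L_def)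
  finally show ?thesis .
qed

lemma height_relation_has_pos_entry:
  fixes ht :: "int^'d \<Rightarrow> int"
  assumes ht: "Modules.additive ht" and ht_v: "\<forall>j<n. ht (v j) = 1"
    and L: "in_L v n g" and nz: "g \<noteq> (\<lambda>_. 0)"
  shows "\<exists>i. 0 < g i"
proof (rule ccontr)
  assume "\<not> (\<exists>i. 0 < g i)"
  then have "\<forall>j\<in>{..<n}. 0 \<le> - g j"
    by (auto simp: not_less)
  moreover have "(\<Sum>j<n. - g j) = 0"
    using height_relation_sum_eq_0[OF ht ht_v L] by (simp add: sum_negf)
  ultimately have "\<forall>j<n. g j = 0"
    using sum_nonneg_eq_0_iff[of "{..<n}" "\<lambda>j. - g j"] by simp
  moreover have "\<forall>j\<ge>n. g j = 0"
    using L by (simp add: in_L_def)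
  ultimately have "g = (\<lambda>_. 0)"
    by (metis not_less)
  with nz show False ..
qed

lemma height_relation_has_pos_and_neg_entries:
  fixes ht :: "int^'d \<Rightarrow> int"
  assumes ht: "Modules.additive ht" and ht_v: "\<forall>j<n. ht (v j) = 1"
    and L: "in_L v n g" and nz: "g \<noteq> (\<lambda>_. 0)"
  shows "\<exists>i. 0 < g i" "\<exists>i. 0 < (- g) i"
proof -
  show "\<exists>i. 0 < g i"
    by (rule height_relation_has_pos_entry[OF ht ht_v L nz])
  have "- g \<noteq> (\<lambda>_. 0)"
    using nz by (simp add: fun_eq_iff)
  then show "\<exists>i. 0 < (- g) i"
    by (rule height_relation_has_pos_entry[OF ht ht_v in_L_uminus[OF L]])
qed

(* Parametrised by the relation g so that the flip is symmetric under g \<mapsto> - g, which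
   exchanges the essential cones of Sigma_+ and Sigma_-. *)
definition circuit_cones :: "(nat set \<Rightarrow> bool) \<Rightarrow> (nat \<Rightarrow> int) \<Rightarrow> nat set set" where
  "circuit_cones sep g = {F \<union> ({i. g i \<noteq> 0} - {j}) | F j. sep F \<and> j \<in> Iplus g}"

lemma essential_plus_eq_circuit_cones:
  "essential_plus n h Tp Tm = circuit_cones (separating n h Tp Tm) h"
  by (simp add: essential_plus_def circuit_cones_def)

lemma essential_minus_eq_circuit_cones:
  "essential_minus n h Tp Tm = circuit_cones (separating n h Tp Tm) (- h)"
  by (simp add: essential_minus_def circuit_cones_def Iplus_def Iminus_def)

lemma circuit_cones_separating_subset:
  "circuit_cones (separating n h Tp Tm) h \<subseteq> Tp"
  "circuit_cones (separating n h Tp Tm) (- h) \<subseteq> Tm"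
  by (auto simp: circuit_cones_def separating_def Iplus_def Iminus_def)

lemma Iplus_subset_support_off_essential:
  assumes fan: "simplicial_fan v n T" and E: "circuit_cones sep g \<subseteq> T"
    and x: "x \<notin> Box_es v n T (circuit_cones sep g)" and q: "box_rep v n T x q"
    and F: "sep F" and supp: "\<forall>k. k \<notin> F \<union> ({l. g l \<noteq> 0} - {j}) \<longrightarrow> q k = 0"
  shows "Iplus g \<subseteq> {k. q k \<noteq> 0}"
proof
  fix k assume k: "k \<in> Iplus g"
  show "k \<in> {k. q k \<noteq> 0}"
  proof (rule CollectI, rule notI)
    assume "q k = 0"
    then have "\<forall>l. l \<notin> F \<union> ({l. g l \<noteq> 0} - {k}) \<longrightarrow> q l = 0"
      using supp by auto
    moreover have "F \<union> ({l. g l \<noteq> 0} - {k}) \<in> circuit_cones sep g"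
      using F k unfolding circuit_cones_def by blast
    ultimately have "x \<in> Box_es v n T (circuit_cones sep g)"
      using Box_es_iff_support[OF fan E q] by blast
    with x show False ..
  qed
qed

lemma box_rep_transfer:
  assumes fan1: "simplicial_fan v n T1" and fan2: "simplicial_fan v n T2"
    and L: "in_L v n g" and pos: "0 < g i"
    and E1: "circuit_cones sep g \<subseteq> T1" and E2: "circuit_cones sep (- g) \<subseteq> T2"
    and T12: "T1 - circuit_cones sep g \<subseteq> T2"
    and x: "x \<notin> Box_es v n T1 (circuit_cones sep g)" and q: "box_rep v n T1 x q"
  shows "box_rep v n T2 x q \<and> x \<notin> Box_es v n T2 (circuit_cones sep (- g))"
proof
  obtain S where S: "S \<in> T1" "\<forall>j. 0 \<le> q j \<and> q j < 1" "\<forall>j. j \<notin> S \<longrightarrow> q j = 0"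
    and rx: "rv x = (\<Sum>j<n. q j *\<^sub>R rv (v j))"
    using q unfolding box_rep_def by meson
  have "S \<notin> circuit_cones sep g"
    using x S(3) Box_es_iff_support[OF fan1 E1 q] by blast
  then have "S \<in> T2"
    using T12 S(1) by blast
  then show q2: "box_rep v n T2 x q"
    unfolding box_rep_def using S(2,3) rx by blast
  show "x \<notin> Box_es v n T2 (circuit_cones sep (- g))"
  proof
    assume "x \<in> Box_es v n T2 (circuit_cones sep (- g))"
    then obtain F j where F: "sep F"
      and supp: "\<forall>k. k \<notin> F \<union> ({l. g l \<noteq> 0} - {j}) \<longrightarrow> q k = 0"
      using Box_es_iff_support[OF fan2 E2 q2] by (auto simp: circuit_cones_def)
    have "Iplus g \<subseteq> S"
      using Iplus_subset_support_off_essential[OF fan1 E1 x q F(1) supp] S(3) by blast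
    moreover have "Iminus g \<subseteq> F \<union> ({l. g l \<noteq> 0} - {i})"
      using pos by (auto simp: Iminus_def)
    moreover have "F \<union> ({l. g l \<noteq> 0} - {i}) \<in> T1"
      using E1 F(1) pos unfolding circuit_cones_def Iplus_def by blast
    ultimately have "g = (\<lambda>_. 0)"
      using relation_split_by_fan_eq_0[OF fan1 S(1) _ L] by blast
    with pos show False
      by simp
  qed
qed

lemma Box_minus_essential_subset:
  assumes "simplicial_fan v n T1" "simplicial_fan v n T2" "in_L v n g" "0 < g i"
    "circuit_cones sep g \<subseteq> T1" "circuit_cones sep (- g) \<subseteq> T2"
    "T1 - circuit_cones sep g \<subseteq> T2"
  shows "Box v n T1 - Box_es v n T1 (circuit_cones sep g)
    \<subseteq> Box v n T2 - Box_es v n T2 (circuit_cones sep (- g))"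
  using box_rep_transfer[OF assms] unfolding Box_def by blast

lemma sigma_box_rep_eq_off_essential:
  assumes fan1: "simplicial_fan v n T1" and fan2: "simplicial_fan v n T2"
    and "in_L v n g" "0 < g i"
    and "circuit_cones sep g \<subseteq> T1" "circuit_cones sep (- g) \<subseteq> T2"
    and "T1 - circuit_cones sep g \<subseteq> T2"
    and x: "x \<in> Box v n T1 - Box_es v n T1 (circuit_cones sep g)"
  shows "sigma v T1 x = sigma v T2 x \<and>
    (\<forall>q q'. box_rep v n T1 x q \<and> box_rep v n T2 x q' \<longrightarrow> q = q')"
proof -
  obtain q where q: "box_rep v n T1 x q"
    using x unfolding Box_def by blast
  have q2: "box_rep v n T2 x q"
    using box_rep_transfer[OF assms(1-7) _ q] x by blast
  have "sigma v T1 x = sigma v T2 x"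
    using sigma_box_rep[OF fan1 q] sigma_box_rep[OF fan2 q2] by simp
  moreover have "q1 = q'" if "box_rep v n T1 x q1" "box_rep v n T2 x q'" for q1 q'
    using box_rep_unique[OF fan1 q that(1)] box_rep_unique[OF fan2 q2 that(2)] by simp
  ultimately show ?thesis
    by blast
qed

(* Multiplication of y^q by t^g, t = cis (2 pi tau), realised on the lattice: the point moves
   by an integer combination of the v j and its coefficients become the fractional parts
   of q + tau g. *)
definition shift_coeffs :: "(nat \<Rightarrow> real) \<Rightarrow> (nat \<Rightarrow> int) \<Rightarrow> real \<Rightarrow> nat \<Rightarrow> real" where
  "shift_coeffs q g \<tau> j = frac (q j + \<tau> * g j)"

definition shift_point ::
    "(nat \<Rightarrow> int^'d) \<Rightarrow> nat \<Rightarrow> int^'d \<Rightarrow> (nat \<Rightarrow> real) \<Rightarrow> (nat \<Rightarrow> int) \<Rightarrow> real \<Rightarrow> int^'d" where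
  "shift_point v n x q g \<tau> = x - (\<Sum>j<n. \<lfloor>q j + \<tau> * g j\<rfloor> *s v j)"

lemma rv_shift_point:
  assumes L: "in_L v n g" and x: "rv x = (\<Sum>j<n. q j *\<^sub>R rv (v j))"
  shows "rv (shift_point v n x q g \<tau>) = (\<Sum>j<n. shift_coeffs q g \<tau> j *\<^sub>R rv (v j))"
proof -
  have "(\<Sum>j<n. (\<tau> * g j) *\<^sub>R rv (v j)) = \<tau> *\<^sub>R (\<Sum>j<n. of_int (g j) *\<^sub>R rv (v j))"
    by (simp add: scaleR_sum_right)
  also have "\<dots> = 0"
    by (simp add: in_L_real_relation[OF L])
  finally have "rv x = (\<Sum>j<n. (q j + \<tau> * g j) *\<^sub>R rv (v j))"
    by (simp add: x scaleR_add_left sum.distrib)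
  then show ?thesis
    by (simp add: shift_point_def shift_coeffs_def frac_def scaleR_diff_left sum_subtractf)
qed

lemma yv_shift_coeffs: "yv (shift_coeffs q g \<tau>) j = yv q j * cis (2 * pi * \<tau>) powi g j"
proof -
  let ?r = "q j + \<tau> * g j"
  have "cis (2 * pi * frac ?r) = cis (2 * pi * frac ?r) * cis (2 * pi * of_int \<lfloor>?r\<rfloor>)"
    by simp
  also have "\<dots> = cis (2 * pi * q j) * cis (2 * pi * \<tau> * g j)"
    by (simp add: cis_mult frac_def algebra_simps)
  finally show ?thesis
    by (simp add: yv_def shift_coeffs_def cis_power_int mult.commute)
qed

lemma box_rep_shift:
  assumes "in_L v n g" "rv x = (\<Sum>j<n. q j *\<^sub>R rv (v j))"
    and "S \<in> T" "\<forall>j. j \<notin> S \<longrightarrow> shift_coeffs q g \<tau> j = 0"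
  shows "box_rep v n T (shift_point v n x q g \<tau>) (shift_coeffs q g \<tau>)"
  unfolding box_rep_def using assms rv_shift_point[OF assms(1,2)]
  by (auto simp: shift_coeffs_def frac_lt_1)

lemma shift_coeffs_support:
  assumes "\<forall>k. k \<notin> F \<union> ({l. g l \<noteq> 0} - {i}) \<longrightarrow> q k = 0" and "q j + \<tau> * g j \<in> \<int>"
  shows "\<forall>k. k \<notin> F \<union> ({l. g l \<noteq> 0} - {j}) \<longrightarrow> shift_coeffs q g \<tau> k = 0"
  using assms by (auto simp: shift_coeffs_def)

lemma nonneg_power_int_eq_1:
  fixes r :: real
  assumes "0 \<le> r" "r powi m = 1" "m \<noteq> 0"
  shows "r = 1"
proof -
  have "r powi \<bar>m\<bar> = 1"
    using assms(2) by (cases "0 \<le> m") (simp_all add: power_int_minus)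
  then have "r ^ nat \<bar>m\<bar> = 1"
    by (metis abs_ge_zero power_int_of_nat int_nat_eq)
  then show ?thesis
    using assms(1,3) power_eq_1_iff[of r "nat \<bar>m\<bar>"] by simp
qed

lemma Ical_yvE:
  assumes "t \<in> Ical n g (yv q)"
  obtains \<tau> j where "t = cis (2 * pi * \<tau>)" "j < n" "g j < 0" "q j + \<tau> * g j \<in> \<int>"
proof -
  obtain j where j: "t \<noteq> 0" "j < n" "g j < 0" and yt: "yv q j * t powi g j = 1"
    using assms unfolding Ical_def by blast
  have "cmod t powi g j = 1"
    using arg_cong[OF yt, of cmod] by (simp add: yv_def norm_mult norm_power_int)
  then have "cmod t = 1"
    using nonneg_power_int_eq_1[of "cmod t" "g j"] j(3) by simp
  define \<tau> where "\<tau> = Arg t / (2 * pi)"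
  have t: "t = cis (2 * pi * \<tau>)"
    using cis_Arg[OF j(1)] \<open>cmod t = 1\<close> by (simp add: \<tau>_def sgn_eq)
  have "cis (2 * pi * (q j + \<tau> * g j)) = 1"
    using yt unfolding t yv_def cis_power_int cis_mult by (simp add: algebra_simps)
  then obtain k :: int where "2 * pi * (q j + \<tau> * g j) = of_int k * (2 * pi)"
    unfolding cis_eq_1_iff by blast
  then have "q j + \<tau> * g j \<in> \<int>"
    by simp
  with that t j(2,3) show thesis .
qed

lemma essential_flip_forward:
  assumes fan1: "simplicial_fan v n T1" and fan2: "simplicial_fan v n T2"
    and E1: "circuit_cones sep g \<subseteq> T1" and E2: "circuit_cones sep (- g) \<subseteq> T2"
    and L: "in_L v n g"
    and x: "x \<in> Box_es v n T1 (circuit_cones sep g)" and q: "box_rep v n T1 x q"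
    and t: "t \<in> Ical n g (yv q)"
  shows "\<exists>x' \<in> Box_es v n T2 (circuit_cones sep (- g)). \<exists>q'. box_rep v n T2 x' q' \<and>
    (\<forall>j<n. yv q j * t powi g j = yv q' j)"
proof -
  obtain F i where F: "sep F" and supp: "\<forall>k. k \<notin> F \<union> ({l. g l \<noteq> 0} - {i}) \<longrightarrow> q k = 0"
    using Box_es_iff_support[OF fan1 E1 q] x by (auto simp: circuit_cones_def)
  obtain \<tau> j where t_eq: "t = cis (2 * pi * \<tau>)" and j: "g j < 0" "q j + \<tau> * g j \<in> \<int>"
    using Ical_yvE[OF t] by blast
  let ?S = "F \<union> ({l. g l \<noteq> 0} - {j})"
  have S: "?S \<in> circuit_cones sep (- g)"
    using F j(1) unfolding circuit_cones_def Iplus_def by force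
  have supp': "\<forall>k. k \<notin> ?S \<longrightarrow> shift_coeffs q g \<tau> k = 0"
    by (rule shift_coeffs_support[OF supp j(2)])
  have rx: "rv x = (\<Sum>j<n. q j *\<^sub>R rv (v j))"
    using q unfolding box_rep_def by blast
  have br: "box_rep v n T2 (shift_point v n x q g \<tau>) (shift_coeffs q g \<tau>)"
    using S E2 by (intro box_rep_shift[OF L rx _ supp']) blast
  have "shift_point v n x q g \<tau> \<in> Box_es v n T2 (circuit_cones sep (- g))"
    using Box_es_iff_support[OF fan2 E2 br] S supp' by blast
  moreover have "yv q k * t powi g k = yv (shift_coeffs q g \<tau>) k" for k
    by (simp add: yv_shift_coeffs t_eq)
  ultimately show ?thesis
    using br by blast
qed

lemma essential_flip_backward:
  assumes fan1: "simplicial_fan v n T1" and fan2: "simplicial_fan v n T2"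
    and E1: "circuit_cones sep g \<subseteq> T1" and E2: "circuit_cones sep (- g) \<subseteq> T2"
    and L: "in_L v n g" and pos: "0 < g i"
    and disj: "\<And>F. sep F \<Longrightarrow> F \<inter> {l. g l \<noteq> 0} = {}"
    and x': "x' \<in> Box_es v n T2 (circuit_cones sep (- g))" and q': "box_rep v n T2 x' q'"
  shows "\<exists>x \<in> Box_es v n T1 (circuit_cones sep g). \<exists>q. box_rep v n T1 x q \<and>
    (\<exists>t \<in> Ical n g (yv q). \<forall>j<n. yv q j * t powi g j = yv q' j)"
proof -
  obtain F j where F: "sep F" "g j < 0"
    and supp: "\<forall>k. k \<notin> F \<union> ({l. g l \<noteq> 0} - {j}) \<longrightarrow> q' k = 0"
    using Box_es_iff_support[OF fan2 E2 q'] x' by (auto simp: circuit_cones_def Iplus_def)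
  have q'j: "q' j = 0"
    using disj[OF F(1)] F(2) supp by auto
  have jn: "j < n"
    using L F(2) unfolding in_L_def by (metis not_less order_less_irrefl)
  define \<tau> where "\<tau> = q' i / g i"
  define q where "q = shift_coeffs q' (- g) \<tau>"
  define t where "t = cis (2 * pi * \<tau>)"
  let ?S = "F \<union> ({l. g l \<noteq> 0} - {i})"
  have S: "?S \<in> circuit_cones sep g"
    using F(1) pos unfolding circuit_cones_def Iplus_def by blast
  have "q' i + \<tau> * (- g) i \<in> \<int>"
    using pos by (simp add: \<tau>_def)
  then have "\<forall>k. k \<notin> F \<union> ({l. (- g) l \<noteq> 0} - {i}) \<longrightarrow> shift_coeffs q' (- g) \<tau> k = 0"
    by (rule shift_coeffs_support[rotated]) (use supp in simp)
  then have supp_q: "\<forall>k. k \<notin> ?S \<longrightarrow> q k = 0"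
    by (simp add: q_def)
  have rx': "rv x' = (\<Sum>j<n. q' j *\<^sub>R rv (v j))"
    using q' unfolding box_rep_def by blast
  have br: "box_rep v n T1 (shift_point v n x' q' (- g) \<tau>) q"
    unfolding q_def using S E1 supp_q
    by (intro box_rep_shift[OF in_L_uminus[OF L] rx']) (auto simp: q_def)
  have "shift_point v n x' q' (- g) \<tau> \<in> Box_es v n T1 (circuit_cones sep g)"
    using Box_es_iff_support[OF fan1 E1 br] S supp_q by blast
  moreover have yq: "yv q k * t powi g k = yv q' k" for k
    by (simp add: q_def t_def yv_shift_coeffs power_int_minus mult.assoc)
  moreover have "t \<in> Ical n g (yv q)"
    using yq[of j] q'j jn F(2) by (auto simp: Ical_def t_def yv_def)
  ultimately show ?thesis
    using br by blast
qed

theorem proposition4p4: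
  fixes v :: "nat \<Rightarrow> int^'d::finite" and n :: nat
    and ht :: "int^'d \<Rightarrow> int" and h :: "nat \<Rightarrow> int"
    and Tp Tm :: "nat set set"
  assumes inj: "inj_on v {..<n}"
    and gen: "\<forall>x. \<exists>c::nat \<Rightarrow> int. x = (\<Sum>j<n. c j *s v j)"
    and ht_hom: "\<forall>x y. ht (x + y) = ht x + ht y"
    and ht_v: "\<forall>j<n. ht (v j) = 1"
    and regp: "is_regular_triangulation v n Tp"
    and regm: "is_regular_triangulation v n Tm"
    and edge: "secondary_edge v n Tp Tm"
    and hprim: "primitive_in_L v n h"
    and circ: "is_circuit v {j. h j \<noteq> 0}"
    and flip: "Tm = (Tp - essential_plus n h Tp Tm) \<union> essential_minus n h Tp Tm"
  shows
    "(Box v n Tp - Box_es v n Tp (essential_plus n h Tp Tm)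
        = Box v n Tm - Box_es v n Tm (essential_minus n h Tp Tm)) \<and>
     (\<forall>x \<in> Box v n Tp - Box_es v n Tp (essential_plus n h Tp Tm).
        sigma v Tp x = sigma v Tm x \<and>
        (\<forall>q q'. box_rep v n Tp x q \<and> box_rep v n Tm x q' \<longrightarrow> (\<forall>j<n. yv q j = yv q' j))) \<and>
     (\<forall>x \<in> Box_es v n Tp (essential_plus n h Tp Tm). \<forall>q. box_rep v n Tp x q \<longrightarrow>
        (\<forall>t \<in> Ical n h (yv q).
           \<exists>x' \<in> Box_es v n Tm (essential_minus n h Tp Tm). \<exists>q'. box_rep v n Tm x' q' \<and>
             (\<forall>j<n. yv q j * t powi h j = yv q' j))) \<and>
     (\<forall>x' \<in> Box_es v n Tm (essential_minus n h Tp Tm). \<forall>q'. box_rep v n Tm x' q' \<longrightarrow>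
        (\<exists>x \<in> Box_es v n Tp (essential_plus n h Tp Tm). \<exists>q. box_rep v n Tp x q \<and>
           (\<exists>t \<in> Ical n h (yv q). \<forall>j<n. yv q j * t powi h j = yv q' j)))"
proof -
  let ?sep = "separating n h Tp Tm"
  have fanp: "simplicial_fan v n Tp" and fanm: "simplicial_fan v n Tm"
    using regp regm by (simp_all add: is_regular_triangulation_def is_triangulation_simplicial_fan)
  have L: "in_L v n h" and nz: "h \<noteq> (\<lambda>_. 0)"
    using hprim by (auto simp: primitive_in_L_def)
  have "Modules.additive ht"
    using ht_hom by (simp add: Modules.additive_def)
  then obtain i i' where i: "0 < h i" and i': "0 < (- h) i'"
    using height_relation_has_pos_and_neg_entries[OF _ ht_v L nz] by metis
  have Ep: "circuit_cones ?sep h \<subseteq> Tp" and Em: "circuit_cones ?sep (- h) \<subseteq> Tm"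
    by (rule circuit_cones_separating_subset)+
  have Tpm: "Tp - circuit_cones ?sep h \<subseteq> Tm" and Tmp: "Tm - circuit_cones ?sep (- h) \<subseteq> Tp"
    using flip unfolding essential_plus_eq_circuit_cones essential_minus_eq_circuit_cones by blast+
  have hh: "- (- h) = h"
    by (simp add: fun_eq_iff)
  have disj: "\<And>F. ?sep F \<Longrightarrow> F \<inter> {l. h l \<noteq> 0} = {}"
    by (auto simp: separating_def)
  show ?thesis
    unfolding essential_plus_eq_circuit_cones essential_minus_eq_circuit_cones
    using Box_minus_essential_subset[OF fanp fanm L i Ep Em Tpm]
      Box_minus_essential_subset[OF fanm fanp in_L_uminus[OF L] i', unfolded hh, OF Em Ep Tmp]
      sigma_box_rep_eq_off_essential[OF fanp fanm L i Ep Em Tpm]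
      essential_flip_forward[OF fanp fanm Ep Em L]
      essential_flip_backward[OF fanp fanm Ep Em L i disj]
    by (simp; blast)
qed

end
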